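(* For every $k\in\mathbb{C}$ with $0<|k|<1$, \[\mathrm{m}\!\left(\frac{4}{k^2}+x+\frac1x+y+\frac1y\right)=\mathrm{m}\!\left(2\left(k+\frac1k\right)+x+\frac1x+y+\frac1y\right)+\mathrm{m}\!\left(2i\left(k-\frac1k\right)+x+\frac1x+y+\frac1y\right).\] Equivalently, with $\mu(t)=\mathrm{m}\!\left(\frac{4}{\sqrt t}+x+\frac1x+y+\frac1y\right)$, $\mu\!\left(\frac{4k^2}{(1+k^2)^2}\right)+\mu\!\left(\frac{-4k^2}{(1-k^2)^2}\right)=\mu(k^4)$.
   Context: $\mathrm{m}(P)=\int_0^1\int_0^1\log|P(e^{2\pi i\theta_1},e^{2\pi i\theta_2})|\,d\theta_1d\theta_2$ is the logarithmic Mahler measure of a Laurent polynomial with complex coefficients. *)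

theory Defs
  imports "HOL-Analysis.Analysis"
begin

definition mahler2 :: "(complex \<Rightarrow> complex \<Rightarrow> complex) \<Rightarrow> real" where
  "mahler2 P = (LINT t : {0..1} \<times> {0..1} | lborel.
      ln (cmod (P (exp (2 * of_real pi * \<i> * of_real (fst t)))
                   (exp (2 * of_real pi * \<i> * of_real (snd t))))))"

definition Pk :: "complex \<Rightarrow> complex \<Rightarrow> complex \<Rightarrow> complex" where
  "Pk c x y = c + x + 1 / x + y + 1 / y"

end

(* For c off the segment [-4, 4], m(c + x + 1/x + y + 1/y) = ln |c| + Re H(c),
   where H(c) is the torus average of Ln (1 + (x + 1/x + y + 1/y) / c); H is holomorphic off
   the segment, and for |c| > 4 expanding the logarithm and integrating the moments of
   x + 1/x + y + 1/y termwise gives H(c) = - h(1/c^2), h(z) = sum_{m>=1} binom(2m,m)^2 z^m / (2m).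
   The series F(z) = sum binom(2m,m)^2 z^m = 1 + 2 z h'(z) satisfies Landen's transformation
   F(x / (4 (1 + x)^2)) = (1 + x) F(x^2 / 16), proved by checking that both sides solve
   Legendre's differential equation. It yields
   - h(x^2/16) + h(x / (4 (1 + x)^2)) + h(- x / (4 (1 - x)^2)) = Ln (1 - x^2) near 0, which at
   x = k^2 reads H(4/k^2) - H(2 (k + 1/k)) - H(2i (k - 1/k)) = Ln (1 - k^4). Analytic
   continuation extends this to 0 < |k| < 1, and taking real parts, with
   |2 (k + 1/k)| |2i (k - 1/k)| = |4/k^2| |1 - k^4|, gives the theorem. *)

theory Submission
  imports Defs "HOL-Complex_Analysis.Complex_Analysis"
begin

section \<open>The Mahler measure as a holomorphic function of the constant term\<close>

definition cos_sum :: "real \<times> real \<Rightarrow> real" where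
  "cos_sum p = 2 * cos (2 * pi * fst p) + 2 * cos (2 * pi * snd p)"

lemma abs_cos_sum_le: "\<bar>cos_sum p\<bar> \<le> 4"
  unfolding cos_sum_def
  using abs_cos_le_one[of "2 * pi * fst p"] abs_cos_le_one[of "2 * pi * snd p"] by linarith

lemma continuous_on_cos_sum [continuous_intros]: "continuous_on S cos_sum"
  unfolding cos_sum_def by (intro continuous_intros)

definition cut_plane :: "complex set" where
  "cut_plane = - (complex_of_real ` {-4..4})"

lemma of_real_notin_cut_plane:
  assumes "\<bar>r\<bar> \<le> 4"
  shows "complex_of_real r \<notin> cut_plane"
proof -
  have "r \<in> {-4..4}"
    using assms by auto
  then show ?thesis
    unfolding cut_plane_def by auto
qed

lemma in_cut_plane_if_norm_gt:
  assumes "cmod c > 4"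
  shows "c \<in> cut_plane"
proof -
  have "cmod (complex_of_real r) \<le> 4" if "r \<in> {-4..4}" for r
    using that by (simp add: abs_le_iff)
  then show ?thesis
    using assms unfolding cut_plane_def by force
qed

lemma open_cut_plane: "open cut_plane"
proof -
  have "compact (complex_of_real ` {-4..4})"
    by (intro compact_continuous_image continuous_intros) auto
  then show ?thesis
    unfolding cut_plane_def by (intro open_Compl compact_imp_closed)
qed

lemma cut_plane_add_real_nonzero:
  assumes "c \<in> cut_plane" "\<bar>r\<bar> \<le> 4"
  shows "c + complex_of_real r \<noteq> 0"
proof
  assume "c + complex_of_real r = 0"
  then have "c = complex_of_real (- r)"
    by (simp add: eq_neg_iff_add_eq_0)
  then show False
    using assms of_real_notin_cut_plane[of "- r"] by simp
qed

lemma cut_plane_nonzero: "c \<in> cut_plane \<Longrightarrow> c \<noteq> 0"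
  using cut_plane_add_real_nonzero[of c 0] by simp

lemma one_add_real_div_notin_nonpos_Reals:
  assumes "c \<in> cut_plane" "\<bar>r\<bar> \<le> 4"
  shows "1 + complex_of_real r / c \<notin> \<real>\<^sub>\<le>\<^sub>0"
proof
  assume "1 + complex_of_real r / c \<in> \<real>\<^sub>\<le>\<^sub>0"
  then obtain s where s: "s \<le> 0" "1 + complex_of_real r / c = complex_of_real s"
    by (auto elim!: nonpos_Reals_cases)
  have "complex_of_real r = complex_of_real (s - 1) * c"
    using s(2) cut_plane_nonzero[OF assms(1)] by (simp add: field_simps)
  then have "c = complex_of_real (r / (s - 1))"
    using s(1) by (simp add: field_simps)
  moreover have "\<bar>r / (s - 1)\<bar> \<le> \<bar>r\<bar>"
  proof -
    have "1 \<le> \<bar>s - 1\<bar>"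
      using s(1) by simp
    then show ?thesis
      by (simp add: abs_divide divide_le_eq mult_le_cancel_left1)
  qed
  ultimately show False
    using assms of_real_notin_cut_plane[of "r / (s - 1)"] by simp
qed

lemma exp_i_add_inverse: "exp (\<i> * of_real t) + 1 / exp (\<i> * of_real t) = of_real (2 * cos t)"
proof -
  have "cos (complex_of_real t) = (exp (\<i> * of_real t) + exp (- (\<i> * of_real t))) / 2"
    by (simp add: cos_exp_eq)
  then show ?thesis
    by (simp add: exp_minus cos_of_real field_simps)
qed

lemma Pk_on_torus:
  "Pk c (exp (2 * of_real pi * \<i> * of_real s)) (exp (2 * of_real pi * \<i> * of_real t))
     = c + complex_of_real (cos_sum (s, t))"
proof -
  have "2 * of_real pi * \<i> * of_real x = \<i> * complex_of_real (2 * pi * x)" for x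
    by simp
  then show ?thesis
    unfolding Pk_def cos_sum_def
    using exp_i_add_inverse[of "2 * pi * s"] exp_i_add_inverse[of "2 * pi * t"]
    by (simp add: algebra_simps)
qed

lemma mahler2_Pk_eq_integral:
  assumes "c \<in> cut_plane"
  shows "mahler2 (Pk c) = integral (cbox (0, 0) (1, 1)) (\<lambda>p. ln (cmod (c + of_real (cos_sum p))))"
proof -
  let ?f = "\<lambda>p. ln (cmod (c + complex_of_real (cos_sum p)))"
  have "continuous_on (cbox (0, 0) (1, 1)) ?f"
    using cut_plane_add_real_nonzero[OF assms abs_cos_sum_le] by (intro continuous_intros) auto
  then have "set_integrable lborel (cbox (0::real, 0::real) (1, 1)) ?f"
    unfolding set_integrable_def by (intro borel_integrable_compact) auto
  then have "(LINT p : cbox (0, 0) (1, 1) | lborel. ?f p) = integral (cbox (0, 0) (1, 1)) ?f"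
    by (rule set_borel_integral_eq_integral)
  moreover have "{0..1::real} \<times> {0..1::real} = cbox (0, 0) (1, 1)"
    by (simp add: cbox_Pair_eq)
  ultimately show ?thesis
    unfolding mahler2_def by (simp add: Pk_on_torus split_beta')
qed

definition mahler_H :: "complex \<Rightarrow> complex" where
  "mahler_H c = integral (cbox (0, 0) (1, 1)) (\<lambda>p. Ln (1 + of_real (cos_sum p) / c))"

lemma continuous_on_Ln_cos_sum [continuous_intros]:
  assumes "c \<in> cut_plane"
  shows "continuous_on S (\<lambda>p. Ln (1 + of_real (cos_sum p) / c))"
  using one_add_real_div_notin_nonpos_Reals[OF assms abs_cos_sum_le] cut_plane_nonzero[OF assms]
  by (intro continuous_intros) auto

lemma ln_norm_add_real:
  assumes "c \<in> cut_plane" "\<bar>r\<bar> \<le> 4"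
  shows "ln (cmod (c + of_real r)) = ln (cmod c) + Re (Ln (1 + of_real r / c))"
proof -
  have "c \<noteq> 0" "1 + complex_of_real r / c \<noteq> 0"
    using cut_plane_nonzero[OF assms(1)] one_add_real_div_notin_nonpos_Reals[OF assms] by auto
  moreover have "c + complex_of_real r = c * (1 + complex_of_real r / c)"
    using \<open>c \<noteq> 0\<close> by (simp add: field_simps)
  ultimately show ?thesis
    by (simp add: norm_mult ln_mult Re_Ln)
qed

lemma mahler2_Pk_eq_mahler_H:
  assumes "c \<in> cut_plane"
  shows "mahler2 (Pk c) = ln (cmod c) + Re (mahler_H c)"
proof -
  let ?B = "cbox (0::real, 0::real) (1, 1)" and ?g = "\<lambda>p. Ln (1 + of_real (cos_sum p) / c)"
  have integrable: "?g integrable_on ?B"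
    using assms by (intro integrable_continuous continuous_intros)
  have "integral ?B (\<lambda>p. ln (cmod (c + of_real (cos_sum p))))
      = integral ?B (\<lambda>p. ln (cmod c) + (Re \<circ> ?g) p)"
    using ln_norm_add_real[OF assms abs_cos_sum_le] by simp
  also have "\<dots> = integral ?B (\<lambda>p. ln (cmod c)) + integral ?B (Re \<circ> ?g)"
    using assms by (intro integral_add) (auto simp: o_def intro!: integrable_continuous continuous_intros)
  also have "\<dots> = ln (cmod c) + Re (mahler_H c)"
    unfolding mahler_H_def integral_linear[OF integrable bounded_linear_Re] by (simp add: content_Pair)
  finally show ?thesis
    using mahler2_Pk_eq_integral[OF assms] by simp
qed

lemma has_field_derivative_Ln_one_add_div:
  assumes "x \<noteq> 0" "1 + a / x \<notin> \<real>\<^sub>\<le>\<^sub>0"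
  shows "((\<lambda>x. Ln (1 + a / x)) has_field_derivative - a / (x * (x + a))) (at x)"
proof -
  have "x + a \<noteq> 0"
  proof
    assume "x + a = 0"
    then have "1 + a / x = 0"
      using assms(1) by (simp add: field_simps)
    then show False
      using assms(2) by simp
  qed
  have "((\<lambda>x. Ln (1 + a / x)) has_field_derivative inverse (1 + a / x) * (- a / x^2)) (at x)"
    using assms
    by (auto intro!: derivative_eq_intros has_field_derivative_Ln[THEN DERIV_chain2]
        simp: power2_eq_square)
  also have "inverse (1 + a / x) * (- a / x^2) = - a / (x * (x + a))"
    using assms(1) \<open>x + a \<noteq> 0\<close> by (simp add: field_simps power2_eq_square)
  finally show ?thesis .
qed

lemma holomorphic_mahler_H_ball:
  assumes "ball c e \<subseteq> cut_plane"
  shows "mahler_H holomorphic_on ball c e"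
  unfolding mahler_H_def
proof (rule leibniz_rule_holomorphic[where fx = "\<lambda>x p. - of_real (cos_sum p) / (x * (x + of_real (cos_sum p)))"])
  fix x t
  assume "x \<in> ball c e"
  then have "x \<in> cut_plane"
    using assms by auto
  then show "((\<lambda>x. Ln (1 + of_real (cos_sum t) / x)) has_field_derivative
      - of_real (cos_sum t) / (x * (x + of_real (cos_sum t)))) (at x within ball c e)"
    using has_field_derivative_Ln_one_add_div[OF cut_plane_nonzero
        one_add_real_div_notin_nonpos_Reals[OF _ abs_cos_sum_le]]
    by (simp add: has_field_derivative_at_within)
next
  fix x
  assume "x \<in> ball c e"
  then show "(\<lambda>p. Ln (1 + of_real (cos_sum p) / x)) integrable_on cbox (0, 0) (1, 1)"
    using assms by (intro integrable_continuous continuous_intros) auto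
next
  have "x * (x + complex_of_real (cos_sum p)) \<noteq> 0" if "x \<in> ball c e" for x p
  proof -
    have "x \<in> cut_plane"
      using that assms by auto
    then show ?thesis
      using cut_plane_nonzero cut_plane_add_real_nonzero[OF _ abs_cos_sum_le] by simp
  qed
  then show "continuous_on (ball c e \<times> cbox (0, 0) (1, 1))
      (\<lambda>(x, p). - of_real (cos_sum p) / (x * (x + of_real (cos_sum p))))"
    unfolding case_prod_beta
    by (intro continuous_intros continuous_on_compose2[OF continuous_on_cos_sum]) auto
qed auto

lemma holomorphic_mahler_H: "mahler_H holomorphic_on cut_plane"
proof -
  have "mahler_H field_differentiable (at c)" if "c \<in> cut_plane" for c
  proof -
    obtain e where "e > 0" "ball c e \<subseteq> cut_plane"
      using open_cut_plane \<open>c \<in> cut_plane\<close> open_contains_ball by blast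
    then show ?thesis
      using holomorphic_mahler_H_ball by (intro holomorphic_on_imp_differentiable_at) auto
  qed
  then show ?thesis
    by (simp add: holomorphic_on_def field_differentiable_at_within)
qed

section \<open>Moments of the cosine sum\<close>

lemma has_integral_exp_2pi_int:
  fixes k :: int
  shows "((\<lambda>t. exp (t *\<^sub>R (2 * pi * \<i> * of_int k))) has_integral (if k = 0 then 1 else 0)) {0..1}"
proof (cases "k = 0")
  case True
  then show ?thesis
    using has_integral_const_real[of "1::complex" 0 1] by simp
next
  case False
  define A where "A = 2 * pi * \<i> * (of_int k :: complex)"
  have "A \<noteq> 0"
    using False by (simp add: A_def)
  have "((\<lambda>t. exp (t *\<^sub>R A) * inverse A) has_vector_derivative exp (t *\<^sub>R A)) (at t within {0..1})" for t
  proof -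
    have "((\<lambda>t. exp (t *\<^sub>R A) * inverse A) has_vector_derivative exp (t *\<^sub>R A) * A * inverse A)
        (at t within {0..1})"
      by (intro has_vector_derivative_mult_left exp_scaleR_has_vector_derivative_right)
    then show ?thesis
      using \<open>A \<noteq> 0\<close> by (simp add: mult.assoc)
  qed
  then have "((\<lambda>t. exp (t *\<^sub>R A)) has_integral (exp (1 *\<^sub>R A) * inverse A - exp (0 *\<^sub>R A) * inverse A)) {0..1}"
    by (intro fundamental_theorem_of_calculus) auto
  moreover have "exp A = 1"
    using exp_integer_2pi[of "of_int k"] by (simp add: A_def mult_ac)
  ultimately show ?thesis
    using False by (simp add: A_def)
qed

lemma of_real_2cos_power:
  "complex_of_real (2 * cos (2 * pi * t)) ^ j =
     (\<Sum>l\<le>j. of_nat (j choose l) * exp (t *\<^sub>R (2 * pi * \<i> * of_int (2 * int l - int j))))"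
proof -
  define e where "e m = exp (t *\<^sub>R (2 * pi * \<i> * of_int m))" for m :: int
  have "complex_of_real (2 * cos (2 * pi * t)) = 2 * cos (complex_of_real (2 * pi * t))"
    by (subst cos_of_real) simp
  also have "\<dots> = e 1 + e (-1)"
    unfolding cos_exp_eq e_def by (simp add: scaleR_conv_of_real mult_ac)
  finally have "complex_of_real (2 * cos (2 * pi * t)) ^ j
      = (\<Sum>l\<le>j. of_nat (j choose l) * e 1 ^ l * e (-1) ^ (j - l))"
    by (simp add: binomial_ring)
  also have "\<dots> = (\<Sum>l\<le>j. of_nat (j choose l) * e (2 * int l - int j))"
  proof (intro sum.cong refl)
    fix l
    assume "l \<in> {..j}"
    then have exponent: "of_nat l * (t *\<^sub>R (2 * pi * \<i> * of_int 1))
        + of_nat (j - l) * (t *\<^sub>R (2 * pi * \<i> * of_int (-1)))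
        = t *\<^sub>R (2 * pi * \<i> * of_int (2 * int l - int j))"
      by (simp add: scaleR_conv_of_real of_nat_diff algebra_simps)
    have "e 1 ^ l * e (-1) ^ (j - l) = e (2 * int l - int j)"
      unfolding e_def exp_of_nat_mult[symmetric] exp_add[symmetric] exponent ..
    then show "of_nat (j choose l) * e 1 ^ l * e (-1) ^ (j - l) = of_nat (j choose l) * e (2 * int l - int j)"
      by (simp add: mult.assoc)
  qed
  finally show ?thesis
    unfolding e_def .
qed

definition cos_moment :: "nat \<Rightarrow> nat" where
  "cos_moment j = (if even j then j choose (j div 2) else 0)"

lemma has_integral_2cos_power:
  "((\<lambda>t. complex_of_real (2 * cos (2 * pi * t)) ^ j) has_integral of_nat (cos_moment j)) {0..1}"
proof -
  have "((\<lambda>t. complex_of_real (2 * cos (2 * pi * t)) ^ j) has_integral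
      (\<Sum>l\<le>j. of_nat (j choose l) * (if 2 * int l - int j = 0 then 1 else 0))) {0..1}"
    unfolding of_real_2cos_power
    by (intro has_integral_sum has_integral_mult_right has_integral_exp_2pi_int) auto
  also have "(\<Sum>l\<le>j. of_nat (j choose l) * (if 2 * int l - int j = 0 then 1 else 0))
      = (\<Sum>l\<le>j. if l = j div 2 then (if even j then of_nat (j choose l) else 0) else (0::complex))"
  proof -
    have "(2 * int l - int j = 0) = (l = j div 2 \<and> even j)" for l
      by presburger
    then show ?thesis
      by (intro sum.cong refl) auto
  qed
  also have "\<dots> = of_nat (cos_moment j)"
    by (simp add: cos_moment_def)
  finally show ?thesis .
qed

lemma central_binomial_product:
  assumes "i \<le> m"
  shows "((2 * m) choose (2 * i)) * ((2 * i) choose i) * ((2 * (m - i)) choose (m - i))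
       = ((2 * m) choose m) * (m choose i)^2"
proof -
  have central: "real ((2 * k) choose k) = fact (2 * k) / (fact k * fact k)" for k
    using binomial_fact[of k "2 * k"] by simp
  have "2 * m - 2 * i = 2 * (m - i)"
    by simp
  then have outer: "real ((2 * m) choose (2 * i)) = fact (2 * m) / (fact (2 * i) * fact (2 * (m - i)))"
    using assms by (simp add: binomial_fact)
  have inner: "real (m choose i) = fact m / (fact i * fact (m - i))"
    using assms by (simp add: binomial_fact)
  have "real (((2 * m) choose (2 * i)) * ((2 * i) choose i) * ((2 * (m - i)) choose (m - i)))
      = real (((2 * m) choose m) * (m choose i)^2)"
    unfolding of_nat_mult of_nat_power central outer inner by (simp add: field_simps power2_eq_square)
  then show ?thesis
    by (simp only: of_nat_eq_iff)
qed

lemma cos_moment_convolution: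
  "(\<Sum>j\<le>n. (n choose j) * cos_moment j * cos_moment (n - j)) = cos_moment n ^ 2"
proof (cases "even n")
  case False
  then have "(n choose j) * cos_moment j * cos_moment (n - j) = 0" if "j \<le> n" for j
    using that by (cases "even j") (auto simp: cos_moment_def)
  then show ?thesis
    using False by (simp add: cos_moment_def)
next
  case True
  then obtain m where n: "n = 2 * m"
    by blast
  let ?f = "\<lambda>j. (n choose j) * cos_moment j * cos_moment (n - j)"
  have "(\<Sum>j\<le>n. ?f j) = (\<Sum>j\<in>(\<lambda>i. 2 * i) ` {..m}. ?f j)"
    by (rule sum.mono_neutral_right) (auto simp: n cos_moment_def elim!: evenE)
  also have "\<dots> = (\<Sum>i\<le>m. ?f (2 * i))"
    by (simp add: sum.reindex inj_on_def)
  also have "\<dots> = (\<Sum>i\<le>m. ((2 * m) choose m) * (m choose i)^2)"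
    by (intro sum.cong refl)
      (auto simp: n cos_moment_def central_binomial_product diff_mult_distrib2[symmetric])
  also have "\<dots> = ((2 * m) choose m) * (\<Sum>i\<le>m. (m choose i)^2)"
    by (simp add: sum_distrib_left)
  also have "\<dots> = cos_moment n ^ 2"
    unfolding choose_square_sum by (simp add: n cos_moment_def power2_eq_square)
  finally show ?thesis .
qed

lemma integral_cos_sum_power:
  "integral (cbox (0, 0) (1, 1)) (\<lambda>p. complex_of_real (cos_sum p) ^ n) = of_nat (cos_moment n ^ 2)"
proof -
  define c where "c x = complex_of_real (2 * cos (2 * pi * x))" for x :: real
  have c_integral: "integral {0..1} (\<lambda>x. c x ^ j) = of_nat (cos_moment j)" for j
    using has_integral_2cos_power[of j] unfolding c_def by (rule integral_unique)
  have c_cont: "continuous_on S (\<lambda>p. c (fst p))" "continuous_on S (\<lambda>p. c (snd p))"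
    for S :: "(real \<times> real) set"
    unfolding c_def by (intro continuous_intros)+
  have "(\<lambda>p. complex_of_real (cos_sum p) ^ n)
      = (\<lambda>p. \<Sum>j\<le>n. of_nat (n choose j) * c (fst p) ^ j * c (snd p) ^ (n - j))"
    unfolding cos_sum_def c_def by (simp add: binomial_ring)
  then have "integral (cbox (0, 0) (1, 1)) (\<lambda>p. complex_of_real (cos_sum p) ^ n)
      = (\<Sum>j\<le>n. integral (cbox (0, 0) (1, 1)) (\<lambda>p. of_nat (n choose j) * c (fst p) ^ j * c (snd p) ^ (n - j)))"
    by (simp add: integral_sum integrable_continuous continuous_intros c_cont)
  also have "\<dots> = (\<Sum>j\<le>n. of_nat (n choose j) * of_nat (cos_moment j) * of_nat (cos_moment (n - j)))"
    by (subst integral_prod_continuous)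
      (auto intro!: continuous_intros c_cont simp: c_integral)
  also have "\<dots> = of_nat (cos_moment n ^ 2)"
    by (simp flip: cos_moment_convolution)
  finally show ?thesis .
qed

section \<open>Landen's transformation as an identity of power series\<close>

lemma Suc_times_central_binomial:
  "Suc n * ((2 * Suc n) choose Suc n) = 2 * (2 * n + 1) * ((2 * n) choose n)"
proof -
  have "Suc n * (Suc (Suc (2 * n)) choose Suc n) = Suc (Suc (2 * n)) * (Suc (2 * n) choose n)"
    by (rule Suc_times_binomial)
  then have "Suc n * ((2 * Suc n) choose Suc n) = 2 * (Suc n * (Suc (2 * n) choose n))"
    by simp
  also have "Suc n * (Suc (2 * n) choose n) = Suc (2 * n) * ((2 * n) choose n)"
    using Suc_times_binomial_eq[of "2 * n" n] binomial_symmetric[of "Suc n" "Suc (2 * n)"]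
    by (simp add: mult.commute)
  finally show ?thesis
    by simp
qed

text \<open>\<open>K_fps\<close> at \<open>k\<^sup>2/16\<close> is \<open>2/\<pi>\<close> times the complete elliptic integral \<open>K(k)\<close>,
  and \<open>legendre_op\<close> is Legendre's differential operator annihilating \<open>K(k)\<close>.\<close>

definition K_fps :: "complex fps" where
  "K_fps = Abs_fps (\<lambda>m. of_nat (((2 * m) choose m)^2))"

lemma K_fps_nth_Suc: "of_nat (Suc n)^2 * K_fps $ Suc n = 4 * of_nat (2 * n + 1)^2 * K_fps $ n"
proof -
  have "(Suc n * ((2 * Suc n) choose Suc n))^2 = (2 * (2 * n + 1) * ((2 * n) choose n))^2"
    by (simp only: Suc_times_central_binomial)
  then have "Suc n ^ 2 * ((2 * Suc n) choose Suc n)^2 = 4 * (2 * n + 1)^2 * ((2 * n) choose n)^2"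
    by (simp only: power_mult_distrib) simp
  then have "of_nat (Suc n ^ 2 * ((2 * Suc n) choose Suc n)^2)
      = (of_nat (4 * (2 * n + 1)^2 * ((2 * n) choose n)^2) :: complex)"
    by (simp only:)
  then show ?thesis
    unfolding K_fps_def fps_nth_Abs_fps by (simp only: of_nat_mult of_nat_power of_nat_numeral)
qed

lemma fps_nth_X_mult_deriv:
  fixes f :: "'a :: comm_ring_1 fps"
  shows "(fps_X * fps_deriv f) $ n = of_nat n * f $ n"
  by (cases n) simp_all

lemma fps_nth_X2_mult_deriv2:
  fixes f :: "'a :: comm_ring_1 fps"
  shows "(fps_X^2 * fps_deriv (fps_deriv f)) $ n = (of_nat n * of_nat n - of_nat n) * f $ n"
proof (cases "n < 2")
  case False
  then obtain j where "n = j + 2"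
    using le_Suc_ex[of 2 n] by (auto simp: add.commute)
  then have "(fps_X^2 * fps_deriv (fps_deriv f)) $ n = of_nat (j + 1) * (of_nat (j + 2) * f $ n)"
    by (simp add: fps_X_power_mult_nth)
  then show ?thesis
    using \<open>n = j + 2\<close> by (simp add: algebra_simps)
qed (auto simp: fps_X_power_mult_nth less_2_cases_iff)

lemma K_fps_ode:
  "fps_X * (1 - 16 * fps_X) * fps_deriv (fps_deriv K_fps) + (1 - 32 * fps_X) * fps_deriv K_fps
     - 4 * K_fps = 0"
proof (rule fps_ext)
  fix n
  have "fps_X * (1 - 16 * fps_X) * fps_deriv (fps_deriv K_fps) + (1 - 32 * fps_X) * fps_deriv K_fps - 4 * K_fps
     = fps_X * fps_deriv (fps_deriv K_fps) - fps_const 16 * (fps_X^2 * fps_deriv (fps_deriv K_fps))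
       + fps_deriv K_fps - fps_const 32 * (fps_X * fps_deriv K_fps) - fps_const 4 * K_fps"
    by (simp add: algebra_simps power2_eq_square fps_numeral_fps_const)
  then have "(fps_X * (1 - 16 * fps_X) * fps_deriv (fps_deriv K_fps) + (1 - 32 * fps_X) * fps_deriv K_fps
        - 4 * K_fps) $ n
      = of_nat n * (of_nat (n + 1) * K_fps $ (n + 1)) - 16 * ((of_nat n * of_nat n - of_nat n) * K_fps $ n)
        + of_nat (n + 1) * K_fps $ (n + 1) - 32 * (of_nat n * K_fps $ n) - 4 * K_fps $ n"
    by (simp only: fps_sub_nth fps_add_nth fps_mult_left_const_nth fps_deriv_nth
        fps_nth_X_mult_deriv fps_nth_X2_mult_deriv2)
  also have "\<dots> = of_nat (Suc n)^2 * K_fps $ Suc n - 4 * of_nat (2 * n + 1)^2 * K_fps $ n"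
    by (simp add: algebra_simps power2_eq_square)
  also have "\<dots> = 0"
    by (simp only: K_fps_nth_Suc diff_self)
  finally show "(fps_X * (1 - 16 * fps_X) * fps_deriv (fps_deriv K_fps) + (1 - 32 * fps_X) * fps_deriv K_fps
      - 4 * K_fps) $ n = 0 $ n"
    unfolding fps_zero_nth .
qed

definition legendre_op :: "complex fps \<Rightarrow> complex fps" where
  "legendre_op Y = (fps_X - fps_X^3) * fps_deriv (fps_deriv Y) + (1 - 3 * fps_X^2) * fps_deriv Y - fps_X * Y"

lemma legendre_op_nth:
  "legendre_op Y $ n = of_nat (n + 1)^2 * Y $ (n + 1) - (if n = 0 then 0 else of_nat n ^ 2 * Y $ (n - 1))"
proof -
  have L: "legendre_op Y = fps_X * fps_deriv (fps_deriv Y) - fps_X^3 * fps_deriv (fps_deriv Y) + fps_deriv Y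
      - fps_const 3 * (fps_X^2 * fps_deriv Y) - fps_X * Y"
    unfolding legendre_op_def by (simp add: algebra_simps fps_numeral_fps_const)
  consider "n = 0" | "n = 1" | "n = 2" | m where "n = Suc (Suc (Suc m))"
    by (metis One_nat_def Suc_1 not0_implies_Suc)
  then show ?thesis
  proof cases
    case 1
    then show ?thesis
      unfolding L by (simp add: fps_X_power_mult_nth)
  next
    case 2
    then show ?thesis
      unfolding L by (simp add: fps_X_power_mult_nth; simp add: algebra_simps power2_eq_square)
  next
    case 3
    then show ?thesis
      unfolding L
      by (simp add: fps_X_power_mult_nth; simp add: algebra_simps power2_eq_square numeral_3_eq_3)
  next
    case 4
    then show ?thesis
      unfolding L by (simp add: fps_X_power_mult_nth; simp add: algebra_simps power2_eq_square)
  qed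
qed

lemma legendre_op_diff: "legendre_op (Y - Z) = legendre_op Y - legendre_op Z"
  unfolding legendre_op_def by (simp add: algebra_simps)

lemma legendre_op_unique:
  fixes Y Z :: "complex fps"
  assumes "legendre_op Y = 0" "legendre_op Z = 0" "Y $ 0 = Z $ 0"
  shows "Y = Z"
proof -
  define D where "D = Y - Z"
  have rec: "of_nat (n + 1)^2 * D $ (n + 1) = (if n = 0 then 0 else of_nat n ^ 2 * D $ (n - 1))" for n
    using legendre_op_nth[of D n] assms(1,2) by (simp add: D_def legendre_op_diff)
  have "D $ n = 0" for n
  proof (induction n rule: less_induct)
    case (less n)
    show ?case
    proof (cases n)
      case 0
      then show ?thesis
        using assms(3) by (simp add: D_def)
    next
      case (Suc m)
      then show ?thesis
        using rec[of m] less[of "m - 1"] by (cases m) (simp_all del: of_nat_Suc)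
    qed
  qed
  then show ?thesis
    by (simp add: D_def fps_eq_iff)
qed

text \<open>The hypotheses say that, once \<open>K_fps'' \<circ> g\<close> is eliminated with the differential equation
  of \<open>K_fps\<close>, the coefficients of \<open>K_fps \<circ> g\<close> and \<open>K_fps' \<circ> g\<close> in
  \<open>g (1 - 16 g) legendre_op (r (K_fps \<circ> g))\<close> vanish.\<close>

lemma legendre_op_mult_compose_K_fps:
  fixes g r :: "complex fps"
  assumes g0: "g $ 0 = 0" and "g \<noteq> 0"
  assumes coeff_K: "4 * (fps_X - fps_X^3) * r * (fps_deriv g)^2 + g * (1 - 16 * g) * legendre_op r = 0"
  assumes coeff_K': "g * (1 - 16 * g) * (2 * (fps_X - fps_X^3) * fps_deriv r * fps_deriv g
      + (fps_X - fps_X^3) * r * fps_deriv (fps_deriv g) + (1 - 3 * fps_X^2) * r * fps_deriv g)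
      = (fps_X - fps_X^3) * r * (fps_deriv g)^2 * (1 - 32 * g)"
  shows "legendre_op (r * (K_fps oo g)) = 0"
proof -
  define A where "A = K_fps oo g"
  define B where "B = fps_deriv K_fps oo g"
  define C where "C = fps_deriv (fps_deriv K_fps) oo g"
  have "(fps_X * (1 - 16 * fps_X) * fps_deriv (fps_deriv K_fps) + (1 - 32 * fps_X) * fps_deriv K_fps
      - 4 * K_fps) oo g = 0"
    by (simp add: K_fps_ode)
  then have ode: "g * (1 - 16 * g) * C + (1 - 32 * g) * B - 4 * A = 0"
    unfolding A_def B_def C_def
    using g0 by (simp add: fps_compose_add_distrib fps_compose_sub_distrib fps_compose_mult_distrib)
  have "fps_deriv A = B * fps_deriv g" "fps_deriv B = C * fps_deriv g"
    unfolding A_def B_def C_def using g0 by (simp_all add: fps_compose_deriv)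
  then have "legendre_op (r * A) = (fps_X - fps_X^3) * (fps_deriv (fps_deriv r) * A
        + 2 * fps_deriv r * B * fps_deriv g + r * C * (fps_deriv g)^2 + r * B * fps_deriv (fps_deriv g))
      + (1 - 3 * fps_X^2) * (fps_deriv r * A + r * B * fps_deriv g) - fps_X * (r * A)"
    unfolding legendre_op_def by (simp add: fps_deriv_mult algebra_simps power2_eq_square)
  then have "g * (1 - 16 * g) * legendre_op (r * A) = 0"
    using ode coeff_K coeff_K' unfolding legendre_op_def by algebra
  moreover have "(1 - 16 * g) $ 0 = 1"
    using g0 by (simp add: fps_numeral_fps_const)
  then have "g * (1 - 16 * g) \<noteq> 0"
    using \<open>g \<noteq> 0\<close> by (metis fps_zero_nth mult_eq_0_iff zero_neq_one)
  ultimately show ?thesis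
    unfolding A_def by simp
qed

definition landen_W :: "complex fps" where
  "landen_W = fps_const (1/16) * fps_X^2"

definition inv_one_plus_X :: "complex fps" where
  "inv_one_plus_X = inverse (1 + fps_X)"

definition landen_U :: "complex fps" where
  "landen_U = fps_const (1/4) * fps_X * inv_one_plus_X^2"

lemma fps_const_quarter: "4 * fps_const (1/4) = (1 :: complex fps)"
  by (simp add: fps_numeral_fps_const)

lemma fps_const_sixteenth: "16 * fps_const (1/16) = (1 :: complex fps)"
  by (simp add: fps_numeral_fps_const)

lemma inv_one_plus_X_mult: "inv_one_plus_X * (1 + fps_X) = 1"
  unfolding inv_one_plus_X_def by (rule inverse_mult_eq_1) simp

lemma fps_deriv_inv_one_plus_X: "fps_deriv inv_one_plus_X = - (inv_one_plus_X^2)"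
  unfolding inv_one_plus_X_def by (subst fps_inverse_deriv) simp_all

lemma fps_deriv2_inv_one_plus_X: "fps_deriv (fps_deriv inv_one_plus_X) = 2 * inv_one_plus_X^3"
  by (simp add: fps_deriv_inv_one_plus_X fps_deriv_power algebra_simps power2_eq_square power3_eq_cube)

lemma landen_W_nth_0 [simp]: "landen_W $ 0 = 0"
  by (simp add: landen_W_def)

lemma landen_U_nth_0 [simp]: "landen_U $ 0 = 0"
  by (simp add: landen_U_def)

lemma fps_deriv_landen_W: "fps_deriv landen_W = 2 * fps_const (1/16) * fps_X"
  by (simp add: landen_W_def fps_deriv_power algebra_simps)

lemma fps_deriv2_landen_W: "fps_deriv (fps_deriv landen_W) = 2 * fps_const (1/16)"
  by (simp add: fps_deriv_landen_W)

lemma fps_deriv_landen_U: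
  "fps_deriv landen_U = fps_const (1/4) * (inv_one_plus_X^2 - 2 * fps_X * inv_one_plus_X^3)"
  unfolding landen_U_def
  by (simp add: fps_deriv_power fps_deriv_inv_one_plus_X algebra_simps power2_eq_square power3_eq_cube)

lemma fps_deriv2_landen_U:
  "fps_deriv (fps_deriv landen_U) = fps_const (1/4) * (6 * fps_X * inv_one_plus_X^4 - 4 * inv_one_plus_X^3)"
  unfolding fps_deriv_landen_U
  by (simp add: fps_deriv_power fps_deriv_inv_one_plus_X algebra_simps power2_eq_square power3_eq_cube
      eval_nat_numeral)

lemma landen_W_nonzero: "landen_W \<noteq> 0"
proof
  assume "landen_W = 0"
  then have "fps_X^2 = (0 :: complex fps)"
    using fps_const_sixteenth unfolding landen_W_def by algebra
  then show False
    by simp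
qed

lemma landen_U_nonzero: "landen_U \<noteq> 0"
proof
  assume "landen_U = 0"
  then have "fps_X = (0 :: complex fps)"
    using fps_const_quarter inv_one_plus_X_mult unfolding landen_U_def by algebra
  then show False
    by simp
qed

lemma legendre_op_K_fps_landen_W: "legendre_op (K_fps oo landen_W) = 0"
proof -
  have "legendre_op (1 * (K_fps oo landen_W)) = 0"
  proof (rule legendre_op_mult_compose_K_fps[OF landen_W_nth_0 landen_W_nonzero])
    have "legendre_op 1 = - fps_X"
      by (simp add: legendre_op_def)
    then show "4 * (fps_X - fps_X^3) * 1 * (fps_deriv landen_W)^2 + landen_W * (1 - 16 * landen_W) * legendre_op 1 = 0"
      unfolding fps_deriv_landen_W
      using fps_const_sixteenth unfolding landen_W_def by algebra
    show "landen_W * (1 - 16 * landen_W) * (2 * (fps_X - fps_X^3) * fps_deriv 1 * fps_deriv landen_W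
        + (fps_X - fps_X^3) * 1 * fps_deriv (fps_deriv landen_W) + (1 - 3 * fps_X^2) * 1 * fps_deriv landen_W)
        = (fps_X - fps_X^3) * 1 * (fps_deriv landen_W)^2 * (1 - 32 * landen_W)"
      unfolding fps_deriv_1 fps_deriv2_landen_W unfolding fps_deriv_landen_W
      using fps_const_sixteenth unfolding landen_W_def by algebra
  qed
  then show ?thesis
    by simp
qed

lemma legendre_op_K_fps_landen_U:
  "legendre_op (inv_one_plus_X * (K_fps oo landen_U)) = 0"
proof (rule legendre_op_mult_compose_K_fps[OF landen_U_nth_0 landen_U_nonzero])
  show "4 * (fps_X - fps_X^3) * inv_one_plus_X * (fps_deriv landen_U)^2
      + landen_U * (1 - 16 * landen_U) * legendre_op (inv_one_plus_X) = 0"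
    unfolding legendre_op_def fps_deriv2_inv_one_plus_X
    unfolding fps_deriv_landen_U fps_deriv_inv_one_plus_X
    using fps_const_quarter inv_one_plus_X_mult unfolding landen_U_def by algebra
  show "landen_U * (1 - 16 * landen_U) * (2 * (fps_X - fps_X^3) * fps_deriv (inv_one_plus_X)
      * fps_deriv landen_U + (fps_X - fps_X^3) * inv_one_plus_X * fps_deriv (fps_deriv landen_U)
      + (1 - 3 * fps_X^2) * inv_one_plus_X * fps_deriv landen_U)
      = (fps_X - fps_X^3) * inv_one_plus_X * (fps_deriv landen_U)^2 * (1 - 32 * landen_U)"
    unfolding fps_deriv2_landen_U unfolding fps_deriv_landen_U fps_deriv_inv_one_plus_X
    using fps_const_quarter inv_one_plus_X_mult unfolding landen_U_def by algebra
qed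

theorem K_fps_landen: "K_fps oo landen_U = (1 + fps_X) * (K_fps oo landen_W)"
proof -
  have "inv_one_plus_X * (K_fps oo landen_U) = K_fps oo landen_W"
    by (rule legendre_op_unique[OF legendre_op_K_fps_landen_U legendre_op_K_fps_landen_W])
      (simp add: inv_one_plus_X_def K_fps_def)
  then have "(1 + fps_X) * (inv_one_plus_X * (K_fps oo landen_U)) = (1 + fps_X) * (K_fps oo landen_W)"
    by simp
  then show ?thesis
    using inv_one_plus_X_mult by algebra
qed

definition h_fps :: "complex fps" where
  "h_fps = Abs_fps (\<lambda>m. if m = 0 then 0 else K_fps $ m / (2 * of_nat m))"

lemma K_fps_eq_deriv_h_fps: "K_fps - 1 = 2 * fps_X * fps_deriv h_fps"
proof (rule fps_ext)
  fix n
  show "(K_fps - 1) $ n = (2 * fps_X * fps_deriv h_fps) $ n"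
  proof (cases n)
    case 0
    then show ?thesis
      by (simp add: K_fps_def h_fps_def mult.assoc fps_numeral_fps_const)
  next
    case (Suc m)
    have "(2 * fps_X * fps_deriv h_fps) $ n = 2 * (of_nat (Suc m) * (K_fps $ Suc m / (2 * of_nat (Suc m))))"
      using Suc by (simp add: h_fps_def mult.assoc fps_numeral_fps_const del: of_nat_Suc)
    also have "\<dots> = K_fps $ Suc m"
      by (simp del: of_nat_Suc)
    finally show ?thesis
      using Suc by simp
  qed
qed

lemma K_fps_compose_eq:
  fixes g :: "complex fps"
  assumes "g $ 0 = 0"
  shows "(K_fps oo g) - 1 = 2 * g * (fps_deriv h_fps oo g)"
proof -
  have "(K_fps - 1) oo g = (2 * fps_X * fps_deriv h_fps) oo g"
    by (simp only: K_fps_eq_deriv_h_fps)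
  then show ?thesis
    using assms by (simp add: fps_compose_sub_distrib fps_compose_mult_distrib)
qed

definition landen_G :: "complex fps" where
  "landen_G = 2 * (h_fps oo landen_U) - (h_fps oo landen_W)"

lemma fps_deriv_landen_G: "fps_deriv landen_G = 2 * inv_one_plus_X - (K_fps oo landen_W)"
proof -
  define hU where "hU = fps_deriv h_fps oo landen_U"
  define hW where "hW = fps_deriv h_fps oo landen_W"
  have "fps_deriv landen_G = 2 * (hU * fps_deriv landen_U) - hW * fps_deriv landen_W"
    unfolding landen_G_def hU_def hW_def by (simp add: fps_compose_deriv)
  moreover have "(1 + fps_X) * (K_fps oo landen_W) - 1 = 2 * landen_U * hU"
    unfolding hU_def K_fps_landen[symmetric] by (rule K_fps_compose_eq) simp
  moreover have "(K_fps oo landen_W) - 1 = 2 * landen_W * hW"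
    unfolding hW_def by (rule K_fps_compose_eq) simp
  ultimately have "fps_X * (fps_deriv landen_G - (2 * inv_one_plus_X - (K_fps oo landen_W))) = 0"
    unfolding fps_deriv_landen_U fps_deriv_landen_W
    using fps_const_quarter fps_const_sixteenth inv_one_plus_X_mult
    unfolding landen_U_def landen_W_def by algebra
  then show ?thesis
    by simp
qed

text \<open>\<open>landen_G\<close> is \<open>2 log(1 + x)\<close> up to an odd power series, so its even part is \<open>log(1 - x\<^sup>2)\<close>.\<close>

definition landen_Q :: "complex fps" where
  "landen_Q = landen_G + (landen_G oo - fps_X)"

lemma landen_W_compose_uminus: "landen_W oo - fps_X = landen_W"
  by (simp add: landen_W_def fps_compose_mult_distrib fps_compose_power[symmetric])

lemma fps_deriv_landen_Q: "fps_deriv landen_Q = 2 * inverse (1 + fps_X) - 2 * inverse (1 - fps_X)"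
proof -
  have "inv_one_plus_X oo - fps_X = inverse (1 - fps_X)"
    by (simp add: inv_one_plus_X_def fps_inverse_compose fps_compose_add_distrib)
  moreover have "(K_fps oo landen_W) oo - fps_X = K_fps oo landen_W"
    by (simp add: fps_compose_assoc[symmetric] landen_W_compose_uminus)
  ultimately have "fps_deriv landen_G oo - fps_X = 2 * inverse (1 - fps_X) - (K_fps oo landen_W)"
    by (simp add: fps_deriv_landen_G fps_compose_sub_distrib fps_compose_mult_distrib)
  then show ?thesis
    by (simp add: landen_Q_def fps_compose_deriv fps_deriv_landen_G inv_one_plus_X_def)
qed

lemma landen_Q_nth_0: "landen_Q $ 0 = 0"
  by (simp add: landen_Q_def landen_G_def h_fps_def)

section \<open>The series as holomorphic functions\<close>

definition h_fun :: "complex \<Rightarrow> complex" where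
  "h_fun = eval_fps h_fps"

lemma norm_h_fps_nth_le: "norm (h_fps $ n) \<le> 16 ^ n"
proof (cases "n = 0")
  case False
  have "(2 * n) choose n \<le> 4 ^ n"
    using binomial_le_pow2[of "2 * n" n] by (simp add: power_mult)
  then have "((2 * n) choose n)^2 \<le> 4 ^ n * 4 ^ n"
    by (simp add: power2_eq_square mult_le_mono)
  also have "(4::nat) ^ n * 4 ^ n = 16 ^ n"
    by (simp flip: power_mult_distrib)
  finally have "real (((2 * n) choose n)^2) \<le> 16 ^ n"
    by (metis of_nat_le_iff of_nat_numeral of_nat_power)
  moreover have "norm (h_fps $ n) = real (((2 * n) choose n)^2) / (2 * real n)"
    using False by (simp add: h_fps_def K_fps_def norm_divide norm_mult norm_power)
  moreover have "real (((2 * n) choose n)^2) / (2 * real n) \<le> real (((2 * n) choose n)^2)"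
    using False by (simp add: divide_le_eq field_simps)
  ultimately show ?thesis
    by linarith
qed (simp add: h_fps_def)

lemma fps_conv_radius_h_fps: "fps_conv_radius h_fps \<ge> ereal (1/16)"
  unfolding fps_conv_radius_def
proof (rule conv_radius_geI_ex')
  fix r :: real
  assume "0 < r" "ereal r < ereal (1/16)"
  then have "16 * r < 1"
    by simp
  show "summable (\<lambda>n. h_fps $ n * complex_of_real r ^ n)"
  proof (rule summable_comparison_test'[where N = 0])
    show "summable (\<lambda>n. (16 * r) ^ n)"
      using \<open>0 < r\<close> \<open>16 * r < 1\<close> by (intro summable_geometric) simp
    fix n
    have "norm (h_fps $ n * complex_of_real r ^ n) = norm (h_fps $ n) * r ^ n"
      using \<open>0 < r\<close> by (simp add: norm_mult norm_power)
    also have "\<dots> \<le> 16 ^ n * r ^ n"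
      using \<open>0 < r\<close> norm_h_fps_nth_le by (simp add: mult_right_mono)
    finally show "norm (h_fps $ n * complex_of_real r ^ n) \<le> (16 * r) ^ n"
      by (simp add: power_mult_distrib)
  qed
qed

lemma h_fun_sums: "cmod z < 1/16 \<Longrightarrow> (\<lambda>n. h_fps $ n * z ^ n) sums h_fun z"
  unfolding h_fun_def
  by (rule sums_eval_fps, rule order.strict_trans2[OF _ fps_conv_radius_h_fps]) simp

lemma h_fun_has_fps_expansion: "h_fun has_fps_expansion h_fps"
proof -
  have "0 < fps_conv_radius h_fps"
    using fps_conv_radius_h_fps by (rule order.strict_trans2[rotated]) simp
  then show ?thesis
    unfolding h_fun_def by (rule eval_fps_has_fps_expansion)
qed

lemma landen_W_has_fps_expansion: "(\<lambda>x. x^2 / 16) has_fps_expansion landen_W"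
proof -
  have "(\<lambda>x::complex. (1/16) * x^2) has_fps_expansion fps_const (1/16) * fps_X^2"
    by (intro fps_expansion_intros)
  then show ?thesis
    unfolding landen_W_def by (simp add: field_simps)
qed

lemma landen_U_has_fps_expansion: "(\<lambda>x. x / (4 * (1 + x)^2)) has_fps_expansion landen_U"
proof -
  have "(\<lambda>x::complex. (1/4) * x * inverse (1 + x)^2) has_fps_expansion landen_U"
    unfolding landen_U_def inv_one_plus_X_def by (intro fps_expansion_intros) simp
  moreover have ev: "eventually (\<lambda>x. (1/4) * x * inverse (1 + x)^2 = x / (4 * (1 + x)^2)) (nhds (0::complex))"
    by (simp add: field_simps)
  ultimately show ?thesis
    using has_fps_expansion_cong[OF ev refl] by (simp only:)
qed

definition landen_G_fun :: "complex \<Rightarrow> complex" where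
  "landen_G_fun x = 2 * h_fun (x / (4 * (1 + x)^2)) - h_fun (x^2 / 16)"

lemma landen_G_fun_has_fps_expansion: "landen_G_fun has_fps_expansion landen_G"
proof -
  have "(\<lambda>x. 2 * (h_fun \<circ> (\<lambda>x. x / (4 * (1 + x)^2))) x - (h_fun \<circ> (\<lambda>x. x^2 / 16)) x)
      has_fps_expansion 2 * (h_fps oo landen_U) - (h_fps oo landen_W)"
    by (intro fps_expansion_intros has_fps_expansion_compose h_fun_has_fps_expansion
        landen_U_has_fps_expansion landen_W_has_fps_expansion landen_U_nth_0 landen_W_nth_0)
  then show ?thesis
    unfolding landen_G_fun_def[abs_def] landen_G_def o_def .
qed

lemma has_fps_expansion_if_deriv:
  fixes f :: "complex \<Rightarrow> complex" and F :: "complex fps"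
  assumes "f analytic_on {0}" "deriv f has_fps_expansion fps_deriv F" "f 0 = F $ 0"
  shows "f has_fps_expansion F"
proof -
  have f: "f has_fps_expansion fps_expansion f 0"
    using assms(1) by (rule analytic_at_imp_has_fps_expansion_0)
  have "fps_deriv (fps_expansion f 0) = fps_deriv F"
    using fps_expansion_eqI[OF has_fps_expansion_deriv[OF f]] fps_expansion_eqI[OF assms(2)] by simp
  moreover have "fps_expansion f 0 $ 0 = F $ 0"
    using has_fps_expansion_imp_0_eq_fps_nth_0[OF f] assms(3) by simp
  ultimately have "fps_expansion f 0 = F"
    by (simp add: fps_deriv_eq_iff)
  then show ?thesis
    using f by simp
qed

lemma one_minus_power_notin_nonpos_Reals:
  fixes x :: complex
  assumes "cmod x < 1" "n > 0"
  shows "1 - x ^ n \<notin> \<real>\<^sub>\<le>\<^sub>0"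
proof -
  have "Re (x ^ n) \<le> cmod (x ^ n)"
    by (rule complex_Re_le_cmod)
  also have "cmod (x ^ n) < 1"
    using assms by (simp add: norm_power power_less_one_iff)
  finally have "Re (1 - x ^ n) > 0"
    by simp
  then show ?thesis
    by (metis Re_complex_of_real nonpos_Reals_cases not_le)
qed

lemma Ln_one_minus_sq_has_fps_expansion: "(\<lambda>x. 2 * Ln (1 - x^2)) has_fps_expansion landen_Q"
proof (rule has_fps_expansion_if_deriv)
  have holo: "(\<lambda>x. 2 * Ln (1 - x^2)) holomorphic_on ball 0 1"
    using one_minus_power_notin_nonpos_Reals[of _ 2] by (intro holomorphic_intros) auto
  then have "(\<lambda>x. 2 * Ln (1 - x^2)) analytic_on ball 0 1"
    by (simp add: analytic_on_open)
  then show "(\<lambda>x. 2 * Ln (1 - x^2)) analytic_on {0}"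
    by (rule analytic_on_subset) auto
  have "eventually (\<lambda>x. x \<in> ball 0 1) (nhds (0::complex))"
    by (rule eventually_nhds_ball) simp
  then have ev: "eventually (\<lambda>x. 2 * inverse (1 + x) - 2 * inverse (1 - x) = deriv (\<lambda>x. 2 * Ln (1 - x^2)) x)
      (nhds (0::complex))"
  proof (rule eventually_mono)
    fix x :: complex
    assume "x \<in> ball 0 1"
    then have "cmod x < 1"
      by simp
    then have "((\<lambda>x. 2 * Ln (1 - x^2)) has_field_derivative 2 * (inverse (1 - x^2) * (- (2 * x)))) (at x)"
      using one_minus_power_notin_nonpos_Reals[of x 2]
      by (auto intro!: derivative_eq_intros has_field_derivative_Ln[THEN DERIV_chain2])
    moreover have "1 + x \<noteq> 0" "1 - x \<noteq> 0"
      using \<open>cmod x < 1\<close> by (auto simp: add_eq_0_iff dest: sym)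
    ultimately show "2 * inverse (1 + x) - 2 * inverse (1 - x) = deriv (\<lambda>x. 2 * Ln (1 - x^2)) x"
      by (simp add: DERIV_imp_deriv field_simps power2_eq_square)
  qed
  moreover have "(\<lambda>x::complex. 2 * inverse (1 + x) - 2 * inverse (1 - x)) has_fps_expansion
      2 * inverse (1 + fps_X) - 2 * inverse (1 - fps_X)"
    by (intro fps_expansion_intros) simp_all
  ultimately show "deriv (\<lambda>x. 2 * Ln (1 - x^2)) has_fps_expansion fps_deriv landen_Q"
    unfolding fps_deriv_landen_Q using has_fps_expansion_cong[OF ev refl] by (simp only:)
  show "2 * Ln (1 - 0^2) = landen_Q $ 0"
    by (simp add: landen_Q_nth_0)
qed

lemma landen_G_fun_even_part:
  "eventually (\<lambda>x. landen_G_fun x + landen_G_fun (- x) = 2 * Ln (1 - x^2)) (nhds 0)"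
proof -
  have "(landen_G_fun \<circ> uminus) has_fps_expansion (landen_G oo - fps_X)"
    using has_fps_expansion_minus[OF has_fps_expansion_fps_X]
    by (intro has_fps_expansion_compose landen_G_fun_has_fps_expansion) simp_all
  then have "(\<lambda>x. landen_G_fun x + (landen_G_fun \<circ> uminus) x) has_fps_expansion landen_Q"
    unfolding landen_Q_def by (rule has_fps_expansion_add[OF landen_G_fun_has_fps_expansion])
  then have "eventually (\<lambda>x. eval_fps landen_Q x = landen_G_fun x + landen_G_fun (- x)) (nhds 0)"
    by (simp add: has_fps_expansion_def)
  moreover have "eventually (\<lambda>x. eval_fps landen_Q x = 2 * Ln (1 - x^2)) (nhds 0)"
    using Ln_one_minus_sq_has_fps_expansion by (simp add: has_fps_expansion_def)
  ultimately show ?thesis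
    by eventually_elim simp
qed

section \<open>The functional equation of \<open>mahler_H\<close>\<close>

lemma sums_integral_if_uniformly_bounded:
  fixes g :: "nat \<Rightarrow> 'a::euclidean_space \<Rightarrow> 'b::banach"
  assumes "\<And>i p. p \<in> cbox a b \<Longrightarrow> norm (g i p) \<le> M i" "summable M"
    and "\<And>i. continuous_on (cbox a b) (g i)"
    and "\<And>p. p \<in> cbox a b \<Longrightarrow> (\<lambda>i. g i p) sums f p"
  shows "(\<lambda>i. integral (cbox a b) (g i)) sums integral (cbox a b) f"
proof -
  have "uniform_limit (cbox a b) (\<lambda>n p. \<Sum>i<n. g i p) (\<lambda>p. \<Sum>i. g i p) sequentially"
    using assms(1,2) by (rule Weierstrass_m_test)
  moreover have "continuous_on (cbox a b) (\<lambda>p. \<Sum>i<n. g i p)" for n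
    using assms(3) by (intro continuous_on_sum) auto
  ultimately obtain I J where
    I: "\<And>n. ((\<lambda>p. \<Sum>i<n. g i p) has_integral I n) (cbox a b)" and
    J: "((\<lambda>p. \<Sum>i. g i p) has_integral J) (cbox a b)" and "I \<longlonglongrightarrow> J"
    by (rule uniform_limit_integral_cbox) auto
  have "I n = integral (cbox a b) (\<lambda>p. \<Sum>i<n. g i p)" for n
    by (rule integral_unique[OF I, symmetric])
  also have "integral (cbox a b) (\<lambda>p. \<Sum>i<n. g i p) = (\<Sum>i<n. integral (cbox a b) (g i))" for n
    using assms(3) by (intro integral_sum) (auto intro: integrable_continuous)
  finally have "I n = (\<Sum>i<n. integral (cbox a b) (g i))" for n .
  then have "I = (\<lambda>n. \<Sum>i<n. integral (cbox a b) (g i))"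
    by (rule ext)
  moreover have "J = integral (cbox a b) f"
  proof -
    have "((\<lambda>p. \<Sum>i. g i p) has_integral J) (cbox a b) \<longleftrightarrow> (f has_integral J) (cbox a b)"
      using assms(4) by (intro has_integral_cong) (simp add: sums_iff)
    then show ?thesis
      using J by (simp add: integral_unique)
  qed
  ultimately show ?thesis
    using \<open>I \<longlonglongrightarrow> J\<close> by (simp add: sums_def)
qed

text \<open>The term \<open>i = 0\<close> vanishes because \<open>1 / of_nat 0 = 0\<close>, as in \<open>Ln_series\<close>.\<close>

lemma norm_Ln_series_term_le:
  fixes z :: complex
  assumes "cmod z \<le> r"
  shows "norm ((-1)^Suc i / of_nat i * z ^ i) \<le> r ^ i"
proof -
  have "norm ((-1)^Suc i / of_nat i :: complex) \<le> 1"
    by (cases i) (simp_all add: norm_divide norm_power del: of_nat_Suc)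
  moreover have "norm (z ^ i) \<le> r ^ i"
    unfolding norm_power using assms by (intro power_mono) simp_all
  ultimately have "norm ((-1)^Suc i / of_nat i :: complex) * norm (z ^ i) \<le> 1 * r ^ i"
    by (intro mult_mono) simp_all
  then show ?thesis
    unfolding norm_mult by simp
qed

lemma mahler_H_sums:
  assumes "cmod c > 4"
  shows "(\<lambda>i. (-1)^Suc i / of_nat i * (1 / c)^i * of_nat (cos_moment i ^ 2)) sums mahler_H c"
proof -
  define g where "g i p = (-1)^Suc i / of_nat i * (of_real (cos_sum p) / c) ^ i" for i p
  define \<rho> where "\<rho> = 4 / cmod c"
  have "c \<noteq> 0" "0 \<le> \<rho>" "\<rho> < 1"
    using assms by (auto simp: \<rho>_def divide_less_eq)
  have small: "cmod (of_real (cos_sum p) / c) \<le> \<rho>" for p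
    using abs_cos_sum_le[of p] by (simp add: \<rho>_def norm_divide divide_right_mono)
  then have bound: "norm (g i p) \<le> \<rho> ^ i" for i p
    unfolding g_def by (rule norm_Ln_series_term_le)
  have sums: "(\<lambda>i. g i p) sums Ln (1 + of_real (cos_sum p) / c)" for p
    unfolding g_def using Ln_series[of "of_real (cos_sum p) / c"] small[of p] \<open>\<rho> < 1\<close> by simp
  have cont: "continuous_on (cbox (0, 0) (1, 1)) (g i)" for i
    unfolding g_def using \<open>c \<noteq> 0\<close> by (intro continuous_on_mult_left continuous_intros) auto
  have "summable (\<lambda>i. \<rho> ^ i)"
    using \<open>0 \<le> \<rho>\<close> \<open>\<rho> < 1\<close> by simp
  from sums_integral_if_uniformly_bounded[where g = g and M = "\<lambda>i. \<rho> ^ i"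
      and f = "\<lambda>p. Ln (1 + of_real (cos_sum p) / c)", OF bound this cont sums]
  have "(\<lambda>i. integral (cbox (0, 0) (1, 1)) (g i)) sums mahler_H c"
    unfolding mahler_H_def .
  moreover have "integral (cbox (0, 0) (1, 1)) (g i)
      = (-1)^Suc i / of_nat i * (1 / c)^i * of_nat (cos_moment i ^ 2)" for i
  proof -
    have "g i = (\<lambda>p. ((-1)^Suc i / of_nat i * (1 / c)^i) * of_real (cos_sum p) ^ i)"
      by (auto simp: g_def power_divide)
    then show ?thesis
      by (simp add: integral_cos_sum_power)
  qed
  ultimately show ?thesis
    by simp
qed

lemma mahler_H_eq_h_fun:
  assumes "cmod c > 4"
  shows "mahler_H c = - h_fun (1 / c^2)"
proof -
  define b where "b = (\<lambda>i. (-1)^Suc i / of_nat i * (1 / c)^i * of_nat (cos_moment i ^ 2))"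
  have "b i = 0" if "i \<notin> range (\<lambda>m. 2 * m)" for i
    using that by (auto simp: b_def cos_moment_def)
  moreover have "b sums mahler_H c"
    unfolding b_def by (rule mahler_H_sums[OF assms])
  ultimately have "(\<lambda>m. b (2 * m)) sums mahler_H c"
    using sums_mono_reindex[of "\<lambda>m. 2 * m" b] by (simp add: strict_mono_def)
  moreover have "b (2 * m) = - (h_fps $ m * (1 / c^2) ^ m)" for m
    by (cases "m = 0")
      (simp_all add: b_def h_fps_def K_fps_def cos_moment_def power_mult power_divide)
  ultimately have "(\<lambda>m. - (h_fps $ m * (1 / c^2) ^ m)) sums mahler_H c"
    by simp
  moreover have "cmod (1 / c^2) < 1/16"
  proof -
    have "4^2 < cmod c ^ 2"
      using assms by (intro power_strict_mono) auto
    then show ?thesis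
      by (simp add: norm_divide norm_power divide_less_eq)
  qed
  then have "(\<lambda>m. - (h_fps $ m * (1 / c^2) ^ m)) sums - h_fun (1 / c^2)"
    by (intro sums_minus h_fun_sums)
  ultimately show ?thesis
    by (rule sums_unique2)
qed

lemma norm_four_div_square_gt:
  assumes "0 < cmod k" "cmod k < 1"
  shows "cmod (4 / k^2) > 4"
proof -
  have "cmod k ^ 2 < 1"
    using assms by (simp add: power_less_one_iff)
  then show ?thesis
    using assms by (simp add: norm_divide norm_power field_simps)
qed

lemma abs_add_inverse_gt_2:
  fixes a :: real
  assumes "0 < \<bar>a\<bar>" "\<bar>a\<bar> < 1"
  shows "\<bar>a + 1 / a\<bar> > 2"
proof -
  have "a + 1 / a = (a^2 + 1) / a"
    using assms by (simp add: field_simps power2_eq_square)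
  then have "\<bar>a + 1 / a\<bar> = (a^2 + 1) / \<bar>a\<bar>"
    by (simp add: abs_divide)
  moreover have "0 < (1 - \<bar>a\<bar>)^2"
    using assms by simp
  then have "2 * \<bar>a\<bar> < a^2 + 1"
    by (simp add: power2_eq_square algebra_simps abs_mult_self_eq)
  ultimately show ?thesis
    using assms by (simp add: pos_less_divide_eq)
qed

lemma joukowski_in_cut_plane:
  assumes "0 < cmod k" "cmod k < 1"
  shows "2 * (k + 1 / k) \<in> cut_plane"
proof (rule ccontr)
  assume "2 * (k + 1 / k) \<notin> cut_plane"
  then obtain r where r: "\<bar>r\<bar> \<le> 4" "2 * (k + 1 / k) = complex_of_real r"
    unfolding cut_plane_def by (auto simp: abs_le_iff)
  have "k + 1 / k = (2 * (k + 1 / k)) / 2"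
    by simp
  also have "\<dots> = complex_of_real (r / 2)"
    unfolding r(2) by simp
  finally have "k + 1 / k = complex_of_real (r / 2)" .
  have "Im k * (1 - 1 / cmod k ^ 2) = Im (k + 1 / k)"
    by (simp add: Im_divide cmod_power2 field_simps)
  also have "\<dots> = 0"
    unfolding \<open>k + 1 / k = complex_of_real (r / 2)\<close> by simp
  finally have "Im k * (1 - 1 / cmod k ^ 2) = 0" .
  moreover have "cmod k ^ 2 < 1"
    using assms by (simp add: power_less_one_iff)
  then have "1 - 1 / cmod k ^ 2 \<noteq> 0"
    using assms by (auto simp: field_simps)
  ultimately have "Im k = 0"
    by (simp only: mult_eq_0_iff simp_thms)
  then have a: "k = complex_of_real (Re k)"
    by (simp add: complex_eq_iff)
  then have "complex_of_real (2 * (Re k + 1 / Re k)) = complex_of_real r"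
    using r(2) by simp
  then have "2 * (Re k + 1 / Re k) = r"
    by (simp only: of_real_eq_iff)
  then have "\<bar>r\<bar> = 2 * \<bar>Re k + 1 / Re k\<bar>"
    by (simp only: abs_mult abs_numeral flip: \<open>2 * (Re k + 1 / Re k) = r\<close>)
  moreover have "\<bar>Re k + 1 / Re k\<bar> > 2"
    using assms a by (intro abs_add_inverse_gt_2) (metis norm_of_real)+
  ultimately have "\<bar>r\<bar> > 4"
    by simp
  then show False
    using r(1) by simp
qed

lemma rotated_joukowski_in_cut_plane:
  assumes "0 < cmod k" "cmod k < 1"
  shows "2 * \<i> * (k - 1 / k) \<in> cut_plane"
proof -
  have "2 * \<i> * (k - 1 / k) = 2 * (\<i> * k + 1 / (\<i> * k))"
    using assms by (simp add: field_simps)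
  moreover have "2 * (\<i> * k + 1 / (\<i> * k)) \<in> cut_plane"
    using assms by (intro joukowski_in_cut_plane) (auto simp: norm_mult)
  ultimately show ?thesis
    by simp
qed

lemma norm_joukowski_gt:
  assumes "0 < cmod k" "cmod k < 1/3"
  shows "cmod (2 * (k + 1 / k)) > 4"
proof -
  have "3 < 1 / cmod k"
    using assms by (simp add: field_simps)
  also have "1 / cmod k \<le> cmod (k + 1 / k) + cmod k"
    using norm_triangle_ineq4[of "k + 1 / k" k] by (simp add: norm_divide)
  finally have "cmod (k + 1 / k) > 2"
    using assms by linarith
  moreover have "cmod (2 * (k + 1 / k)) = 2 * cmod (k + 1 / k)"
    by (simp only: norm_mult norm_numeral)
  ultimately show ?thesis
    by linarith
qed

lemma mahler_H_landen_eq_landen_G_fun: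
  assumes "0 < cmod k" "cmod k < 1/3"
  shows "2 * (mahler_H (4 / k^2) - mahler_H (2 * (k + 1 / k)) - mahler_H (2 * \<i> * (k - 1 / k)))
    = landen_G_fun (k^2) + landen_G_fun (- (k^2))"
proof -
  have "k \<noteq> 0" "cmod k < 1"
    using assms by auto
  have H0: "mahler_H (4 / k^2) = - h_fun ((k^2)^2 / 16)"
    using norm_four_div_square_gt[OF assms(1) \<open>cmod k < 1\<close>] \<open>k \<noteq> 0\<close>
    by (simp add: mahler_H_eq_h_fun field_simps)
  have H1: "mahler_H (2 * (k + 1 / k)) = - h_fun (k^2 / (4 * (1 + k^2)^2))"
    using norm_joukowski_gt[OF assms] \<open>k \<noteq> 0\<close>
    by (simp add: mahler_H_eq_h_fun field_simps power2_eq_square)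
  have H2: "mahler_H (2 * \<i> * (k - 1 / k)) = - h_fun (- (k^2) / (4 * (1 + - (k^2))^2))"
  proof -
    have "2 * \<i> * (k - 1 / k) = 2 * (\<i> * k + 1 / (\<i> * k))"
      using \<open>k \<noteq> 0\<close> by (simp add: field_simps)
    moreover have "cmod (2 * (\<i> * k + 1 / (\<i> * k))) > 4"
      using assms by (intro norm_joukowski_gt) (auto simp: norm_mult)
    ultimately have "mahler_H (2 * \<i> * (k - 1 / k)) = - h_fun (1 / (2 * \<i> * (k - 1 / k))^2)"
      by (intro mahler_H_eq_h_fun) simp
    moreover have "(2 * \<i> * (k - 1 / k))^2 = - (4 * (1 - k^2)^2) / k^2"
      using \<open>k \<noteq> 0\<close> by (simp add: field_simps power2_eq_square)
    ultimately show ?thesis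
      by (simp add: minus_divide_left[symmetric])
  qed
  have "2 * (- c - - a - - b) = 2 * a - c + (2 * b - c)" for a b c :: complex
    by (simp add: algebra_simps)
  then show ?thesis
    unfolding H0 H1 H2 landen_G_fun_def power2_minus .
qed

lemma mahler_H_landen_near_0:
  obtains e where "e > 0" "\<And>k. 0 < cmod k \<Longrightarrow> cmod k < e \<Longrightarrow>
    mahler_H (4 / k^2) - mahler_H (2 * (k + 1 / k)) - mahler_H (2 * \<i> * (k - 1 / k)) = Ln (1 - k^4)"
proof -
  obtain d where "d > 0"
    and d: "\<And>x. cmod x < d \<Longrightarrow> landen_G_fun x + landen_G_fun (- x) = 2 * Ln (1 - x^2)"
    using landen_G_fun_even_part unfolding eventually_nhds_metric by (auto simp: dist_norm)
  show ?thesis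
  proof (rule that[of "min (1/3) d"])
    show "min (1/3) d > 0"
      using \<open>d > 0\<close> by simp
    fix k :: complex
    assume k: "0 < cmod k" "cmod k < min (1/3) d"
    have "cmod (k^2) \<le> cmod k"
      using k by (simp add: power2_eq_square norm_mult mult_left_le_one_le)
    then have "landen_G_fun (k^2) + landen_G_fun (- (k^2)) = 2 * Ln (1 - (k^2)^2)"
      using k by (intro d) simp
    also have "(k^2)^2 = k^4"
      by (subst power_mult[symmetric]) simp
    finally have "2 * (mahler_H (4 / k^2) - mahler_H (2 * (k + 1 / k)) - mahler_H (2 * \<i> * (k - 1 / k)))
        = 2 * Ln (1 - k^4)"
      using mahler_H_landen_eq_landen_G_fun[of k] k by simp
    then show "mahler_H (4 / k^2) - mahler_H (2 * (k + 1 / k)) - mahler_H (2 * \<i> * (k - 1 / k))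
        = Ln (1 - k^4)"
      by (rule mult_left_cancel[THEN iffD1, rotated]) simp
  qed
qed

lemma holomorphic_mahler_H_landen:
  "(\<lambda>k. mahler_H (4 / k^2) - mahler_H (2 * (k + 1 / k)) - mahler_H (2 * \<i> * (k - 1 / k)))
     holomorphic_on ball 0 1 - {0}"
proof -
  have comp: "(\<lambda>k. mahler_H (f k)) holomorphic_on ball 0 1 - {0}"
    if "f holomorphic_on ball 0 1 - {0}" "\<And>k. 0 < cmod k \<Longrightarrow> cmod k < 1 \<Longrightarrow> f k \<in> cut_plane" for f
    using that(1)
    by (intro holomorphic_on_compose_gen[OF _ holomorphic_mahler_H, unfolded o_def]) (auto intro!: that(2))
  have "(\<lambda>k. mahler_H (4 / k^2)) holomorphic_on ball 0 1 - {0}"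
    by (rule comp) (auto intro!: holomorphic_intros in_cut_plane_if_norm_gt norm_four_div_square_gt)
  moreover have "(\<lambda>k. mahler_H (2 * (k + 1 / k))) holomorphic_on ball 0 1 - {0}"
    by (rule comp[OF _ joukowski_in_cut_plane]) (auto intro!: holomorphic_intros)
  moreover have "(\<lambda>k. mahler_H (2 * \<i> * (k - 1 / k))) holomorphic_on ball 0 1 - {0}"
    by (rule comp[OF _ rotated_joukowski_in_cut_plane]) (auto intro!: holomorphic_intros)
  ultimately show ?thesis
    by (intro holomorphic_intros)
qed

lemma mahler_H_landen:
  assumes "0 < cmod k" "cmod k < 1"
  shows "mahler_H (4 / k^2) - mahler_H (2 * (k + 1 / k)) - mahler_H (2 * \<i> * (k - 1 / k)) = Ln (1 - k^4)"
proof -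
  obtain e where "e > 0" and e: "\<And>k. 0 < cmod k \<Longrightarrow> cmod k < e \<Longrightarrow>
      mahler_H (4 / k^2) - mahler_H (2 * (k + 1 / k)) - mahler_H (2 * \<i> * (k - 1 / k)) = Ln (1 - k^4)"
    using mahler_H_landen_near_0 by blast
  define s where "s = ball (0::complex) (min e 1) - {0}"
  have "complex_of_real (min e 1 / 2) \<in> s"
    using \<open>e > 0\<close> by (auto simp: s_def)
  then have "s \<noteq> {}"
    by blast
  have Ln_holo: "(\<lambda>k. Ln (1 - k^4)) holomorphic_on ball 0 1 - {0}"
    using one_minus_power_notin_nonpos_Reals[of _ 4] by (intro holomorphic_intros) auto
  show ?thesis
  proof (rule analytic_continuation_open[OF _ _ \<open>s \<noteq> {}\<close> _ _ holomorphic_mahler_H_landen Ln_holo])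
    show "open s" "open (ball (0::complex) 1 - {0})" "connected (ball (0::complex) 1 - {0})"
      by (auto simp: s_def connected_punctured_ball)
    show "s \<subseteq> ball 0 1 - {0}" "k \<in> ball 0 1 - {0}"
      using assms by (auto simp: s_def)
    show "mahler_H (4 / z^2) - mahler_H (2 * (z + 1 / z)) - mahler_H (2 * \<i> * (z - 1 / z)) = Ln (1 - z^4)"
      if "z \<in> s" for z
      using that by (intro e) (auto simp: s_def)
  qed
qed

lemma norm_joukowski_product:
  assumes "k \<noteq> 0"
  shows "cmod (2 * (k + 1 / k)) * cmod (2 * \<i> * (k - 1 / k)) = cmod (4 / k^2) * cmod (1 - k^4)"
proof -
  have "(2 * (k + 1 / k)) * (2 * \<i> * (k - 1 / k)) = - \<i> * (4 / k^2) * (1 - k^4)"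
    using assms by (simp add: field_simps eval_nat_numeral)
  then have "cmod ((2 * (k + 1 / k)) * (2 * \<i> * (k - 1 / k))) = cmod (- \<i> * (4 / k^2) * (1 - k^4))"
    by (rule arg_cong)
  then show ?thesis
    by (simp only: norm_mult norm_minus_cancel norm_ii mult_1)
qed

lemma ln_norm_joukowski_sum:
  assumes "0 < cmod k" "cmod k < 1"
  shows "ln (cmod (2 * (k + 1 / k))) + ln (cmod (2 * \<i> * (k - 1 / k)))
    = ln (cmod (4 / k^2)) + ln (cmod (1 - k^4))"
proof -
  have "2 * (k + 1 / k) \<noteq> 0" "2 * \<i> * (k - 1 / k) \<noteq> 0"
    using assms joukowski_in_cut_plane rotated_joukowski_in_cut_plane cut_plane_nonzero by blast+
  then have "ln (cmod (2 * (k + 1 / k))) + ln (cmod (2 * \<i> * (k - 1 / k)))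
      = ln (cmod (2 * (k + 1 / k)) * cmod (2 * \<i> * (k - 1 / k)))"
    by (simp add: ln_mult)
  also have "\<dots> = ln (cmod (4 / k^2) * cmod (1 - k^4))"
    using assms by (subst norm_joukowski_product) auto
  also have "\<dots> = ln (cmod (4 / k^2)) + ln (cmod (1 - k^4))"
    using assms one_minus_power_notin_nonpos_Reals[of k 4] nonpos_Reals_zero_I
    by (subst ln_mult) auto
  finally show ?thesis .
qed

theorem mainTheorem5:
  fixes k :: complex
  assumes "0 < cmod k" and "cmod k < 1"
  shows "mahler2 (Pk (4 / k^2)) =
         mahler2 (Pk (2 * (k + 1 / k))) + mahler2 (Pk (2 * \<i> * (k - 1 / k)))"
proof -
  have c0: "4 / k^2 \<in> cut_plane"
    using assms by (intro in_cut_plane_if_norm_gt norm_four_div_square_gt)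
  have c1: "2 * (k + 1 / k) \<in> cut_plane"
    using assms by (rule joukowski_in_cut_plane)
  have c2: "2 * \<i> * (k - 1 / k) \<in> cut_plane"
    using assms by (rule rotated_joukowski_in_cut_plane)
  have "1 - k^4 \<noteq> 0"
    using one_minus_power_notin_nonpos_Reals[of k 4] assms(2) nonpos_Reals_zero_I by force
  then have "Re (mahler_H (4 / k^2) - mahler_H (2 * (k + 1 / k)) - mahler_H (2 * \<i> * (k - 1 / k)))
      = ln (cmod (1 - k^4))"
    unfolding mahler_H_landen[OF assms] by (rule Re_Ln)
  then show ?thesis
    using ln_norm_joukowski_sum[OF assms]
    unfolding mahler2_Pk_eq_mahler_H[OF c0] mahler2_Pk_eq_mahler_H[OF c1] mahler2_Pk_eq_mahler_H[OF c2]
    by simp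
qed

end
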